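(* Define, for $x\in\mathbb{R}$, $$f_{U|-1}(x)=\frac{0.5}{\sqrt{2\pi}}e^{-(x+2)^{2}}+\frac{0.5}{\sqrt{2\pi}}e^{-x^{2}},\qquad f_{U|+1}(x)=\frac{0.5}{\sqrt{2\pi}}e^{-(x-2)^{2}}+\frac{0.5}{\sqrt{2\pi}}e^{-x^{2}},$$ and let $\Phi(t)=1$ for $t\ge 0$ and $\Phi(t)=0$ for $t<0$. Then there does not exist a continuous function $\Psi:\mathbb{R}\times\mathbb{R}\to[0,\infty)$, $(v,u)\mapsto\Psi(v|u)$, satisfying all three of the following conditions: (1) for every fixed $u\in\mathbb{R}$, $v\mapsto\Psi(v|u)$ is a probability density function on $\mathbb{R}$; (2) the quantity $\int_{-\infty}^{+\infty}\left|\int_{-\infty}^{t}\Psi(v|u)\,dv-\Phi(t-u)\right|^{2}dt$, as $u$ ranges over $\mathbb{R}$, has a strictly positive lower bound (i.e., there is $c>0$ with this quantity $\ge c$ for every $u\in\mathbb{R}$); (3) for each $\mathsf{x}_1\in\{-1,+1\}$ and every $v\in\mathbb{R}$, $\int_{-\infty}^{+\infty}f_{U|\mathsf{x}_1}(u)\Psi(v|u)\,du=f_{U|\mathsf{x}_1}(v)$.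
   Context: This is the "non-manipulability" of the following channel: $X_1,X_2$ are independent and uniform on $\{-1,+1\}$, $N_r$ is noise independent of them with density proportional to $e^{-x^2}$, and the relay receives $U=X_1+X_2+N_r$; $f_{U|\mathsf{x}_1}$ is (up to the printed normalizing constant, which does not affect the claim) the conditional density of $U$ given $X_1=\mathsf{x}_1$. $\Psi(v|u)$ is interpreted as a (memoryless) rule by which the relay, having received $u$, produces a forwarded value $v$; condition (2) says the rule is uniformly bounded away from forwarding $u$ unchanged. *)

theory Defs
  imports "HOL-Analysis.Analysis"
begin

text \<open>Conditional density f_{U|x1} of U = X1 + X2 + N_r given X1 = x1, for x1 in {-1,+1},
  with the normalizing constant as printed in the paper.\<close>
definition fU :: "real \<Rightarrow> real \<Rightarrow> real" where
  "fU x1 x = 0.5 / sqrt (2 * pi) * exp (- ((x - 2 * x1)\<^sup>2)) + 0.5 / sqrt (2 * pi) * exp (- (x\<^sup>2))"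

definition Phi :: "real \<Rightarrow> real" where
  "Phi t = (if t \<ge> 0 then 1 else 0)"

end

theory Submission
  imports Defs "HOL-Probability.Probability"
begin

text \<open>Both conditional densities \<open>f(\<cdot>|-1)\<close>, \<open>f(\<cdot>|+1)\<close> are stationary for the relay kernel \<open>\<Psi>\<close>,
  and their ratio \<open>f(\<cdot>|+1) / f(\<cdot>|-1)\<close> is strictly increasing, so suitable multiples of them cross
  at any prescribed level \<open>t\<close>. Comparing the stationary flow balances across \<open>t\<close> for these two
  multiples shows that the kernel moves no mass across \<open>t\<close>. By continuity \<open>\<Psi>(v|u) = 0\<close> whenever
  \<open>v \<noteq> u\<close>, so \<open>\<Psi>(\<cdot>|u)\<close> cannot have total mass 1.\<close>

lemma continuous_AE_zero_imp_zero:
  fixes g :: "real \<Rightarrow> real"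
  assumes g: "continuous_on UNIV g" and zero: "AE x in lborel. x \<in> U \<longrightarrow> g x = 0"
    and U: "open U" "x \<in> U"
  shows "g x = 0"
proof (rule ccontr)
  assume "g x \<noteq> 0"
  with U have "open (U \<inter> {y. g y \<noteq> 0})" "x \<in> U \<inter> {y. g y \<noteq> 0}"
    using open_Collect_neq[OF g continuous_on_const] by auto
  then obtain e where e: "e > 0" "ball x e \<subseteq> U \<inter> {y. g y \<noteq> 0}"
    by (meson open_contains_ball)
  have "AE y in lborel. y \<notin> {x - e <..< x + e}"
    using zero by eventually_elim (use e in \<open>auto simp: dist_real_def subset_iff\<close>)
  then have "emeasure lborel {x - e <..< x + e} = 0"
    by (subst (asm) AE_iff_measurable[OF _ refl])
      (auto simp: greaterThanLessThan_def greaterThan_def lessThan_def Collect_conj_eq[symmetric])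
  with e show False by simp
qed

lemma nn_integral_indicator_split_diff:
  assumes [measurable]: "f \<in> borel_measurable M" "g \<in> borel_measurable M" "h \<in> borel_measurable M"
    "X \<in> sets M"
    and le: "\<And>x. x \<in> X \<Longrightarrow> g x \<le> f x" and g0: "\<And>x. 0 \<le> g x"
  shows "(\<integral>\<^sup>+ x. indicator X x * ennreal (f x) * h x \<partial>M) =
    (\<integral>\<^sup>+ x. indicator X x * ennreal (g x) * h x \<partial>M) + (\<integral>\<^sup>+ x. indicator X x * ennreal (f x - g x) * h x \<partial>M)"
proof -
  have "indicator X x * ennreal (f x) * h x =
      indicator X x * ennreal (g x) * h x + indicator X x * ennreal (f x - g x) * h x" for x
  proof (cases "x \<in> X")
    case True
    then have "ennreal (f x) = ennreal (g x) + ennreal (f x - g x)"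
      using le[of x] g0[of x] by (subst ennreal_plus[symmetric]) auto
    then show ?thesis by (simp add: distrib_left distrib_right)
  qed simp
  then show ?thesis by (simp add: nn_integral_add)
qed

lemma nn_integral_indicator_mult_le:
  assumes "\<And>x. h x \<le> 1"
  shows "(\<integral>\<^sup>+ x. indicator X x * f x * h x \<partial>M) \<le> (\<integral>\<^sup>+ x. f x \<partial>M)"
proof (rule nn_integral_mono)
  fix x
  have "indicator X x * f x * h x \<le> 1 * f x * 1"
    by (intro mult_mono assms) (auto simp: indicator_def)
  then show "indicator X x * f x * h x \<le> f x" by simp
qed

locale continuous_transition_density =
  fixes G :: "real \<Rightarrow> real \<Rightarrow> real"
  assumes continuous: "continuous_on UNIV (\<lambda>(v, u). G v u)"
    and nonneg: "\<And>v u. 0 \<le> G v u"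
    and total_mass: "\<And>u. (\<integral>\<^sup>+ v. ennreal (G v u) \<partial>lborel) = 1"
begin

lemma continuous_on_fst_slice: "continuous_on UNIV (\<lambda>v. G v u)"
  using continuous_on_compose2[OF continuous, of UNIV "\<lambda>v. (v, u)"]
  by (simp add: continuous_on_Pair continuous_on_id)

lemma continuous_on_snd_slice: "continuous_on UNIV (\<lambda>u. G v u)"
  using continuous_on_compose2[OF continuous, of UNIV "\<lambda>u. (v, u)"]
  by (simp add: continuous_on_Pair continuous_on_id)



lemma borel_measurable_swap [measurable]: "(\<lambda>(u, v). G v u) \<in> borel_measurable (lborel \<Otimes>\<^sub>M lborel)"
proof -
  have "continuous_on UNIV (\<lambda>(u, v). G v u)"
    using continuous_on_compose2[OF continuous, of UNIV "\<lambda>(u, v). (v, u)"]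
    by (simp add: case_prod_beta' continuous_on_Pair continuous_on_fst continuous_on_snd continuous_on_id)
  then have "(\<lambda>(u, v). G v u) \<in> borel_measurable (borel :: (real \<times> real) measure)"
    by (rule borel_measurable_continuous_onI)
  then show ?thesis
    by (simp add: lborel_prod)
qed

definition transition :: "real set \<Rightarrow> real \<Rightarrow> ennreal" where
  "transition X u = (\<integral>\<^sup>+ v. indicator X v * ennreal (G v u) \<partial>lborel)"

lemma borel_measurable_transition [measurable]:
  assumes [measurable]: "X \<in> sets borel"
  shows "transition X \<in> borel_measurable borel"
  unfolding transition_def by measurable

lemma transition_le_1: "transition X u \<le> 1"
proof -
  have "transition X u \<le> (\<integral>\<^sup>+ v. ennreal (G v u) \<partial>lborel)"
    unfolding transition_def by (rule nn_integral_mono) (simp split: split_indicator)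
  then show ?thesis by (simp add: total_mass)
qed

lemma transition_lessThan_atLeast: "transition {..<t} u + transition {t..} u = 1"
proof -
  have "transition {..<t} u + transition {t..} u = (\<integral>\<^sup>+ v. ennreal (G v u) \<partial>lborel)"
    unfolding transition_def
    by (subst nn_integral_add[symmetric]) (auto intro!: nn_integral_cong simp: indicator_def)
  then show ?thesis by (simp add: total_mass)
qed

lemma transition_eq_0_imp_zero:
  assumes "transition X u = 0" "X \<in> sets borel" "open Y" "Y \<subseteq> X" "v \<in> Y"
  shows "G v u = 0"
proof -
  note [measurable] = assms(2)
  have "AE v in lborel. indicator X v * ennreal (G v u) = 0"
    using assms(1) unfolding transition_def by (subst (asm) nn_integral_0_iff_AE) auto
  then have "AE v in lborel. v \<in> Y \<longrightarrow> G v u = 0"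
    by eventually_elim (use assms(4) nonneg in auto)
  from continuous_AE_zero_imp_zero[OF continuous_on_fst_slice this assms(3,5)] show ?thesis .
qed

definition stationary :: "(real \<Rightarrow> real) \<Rightarrow> bool" where
  "stationary w \<longleftrightarrow> w \<in> borel_measurable borel \<and> (\<forall>u. 0 \<le> w u)
    \<and> (\<integral>\<^sup>+ u. ennreal (w u) \<partial>lborel) \<noteq> \<infinity>
    \<and> (\<forall>v. (\<integral>\<^sup>+ u. ennreal (w u * G v u) \<partial>lborel) = ennreal (w v))"

lemma stationary_scale:
  assumes w: "stationary w" and k: "0 \<le> k"
  shows "stationary (\<lambda>u. k * w u)"
proof -
  note [measurable] = conjunct1[OF w[unfolded stationary_def]]
  have w0: "0 \<le> w u" for u using w by (simp add: stationary_def)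
  have "(\<integral>\<^sup>+ u. ennreal (k * w u * G v u) \<partial>lborel) = ennreal k * (\<integral>\<^sup>+ u. ennreal (w u * G v u) \<partial>lborel)" for v
    using k w0 nonneg by (subst nn_integral_cmult[symmetric]) (auto simp: ennreal_mult mult.assoc)
  moreover have "(\<integral>\<^sup>+ u. ennreal (k * w u) \<partial>lborel) = ennreal k * (\<integral>\<^sup>+ u. ennreal (w u) \<partial>lborel)"
    using k w0 by (subst nn_integral_cmult[symmetric]) (auto simp: ennreal_mult)
  ultimately show ?thesis
    using w k by (auto simp: stationary_def ennreal_mult ennreal_mult_eq_top_iff)
qed

lemma nn_integral_stationary:
  assumes w: "stationary w" and [measurable]: "X \<in> sets borel"
  shows "(\<integral>\<^sup>+ v. indicator X v * ennreal (w v) \<partial>lborel) =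
    (\<integral>\<^sup>+ u. ennreal (w u) * transition X u \<partial>lborel)"
proof -
  note [measurable] = conjunct1[OF w[unfolded stationary_def]]
  have w0: "0 \<le> w u" for u using w by (simp add: stationary_def)
  have "(\<integral>\<^sup>+ v. indicator X v * ennreal (w v) \<partial>lborel)
      = (\<integral>\<^sup>+ v. indicator X v * (\<integral>\<^sup>+ u. ennreal (w u * G v u) \<partial>lborel) \<partial>lborel)"
    using w by (simp add: stationary_def)
  also have "\<dots> = (\<integral>\<^sup>+ v. (\<integral>\<^sup>+ u. indicator X v * ennreal (w u * G v u) \<partial>lborel) \<partial>lborel)"
    by (rule nn_integral_cong, subst nn_integral_cmult) auto
  also have "\<dots> = (\<integral>\<^sup>+ u. (\<integral>\<^sup>+ v. indicator X v * ennreal (w u * G v u) \<partial>lborel) \<partial>lborel)"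
    by (rule lborel_pair.Fubini') measurable
  also have "\<dots> = (\<integral>\<^sup>+ u. ennreal (w u) * transition X u \<partial>lborel)"
    unfolding transition_def
    by (rule nn_integral_cong, subst nn_integral_cmult[symmetric])
      (auto intro!: nn_integral_cong simp: ennreal_mult w0 nonneg mult_ac)
  finally show ?thesis .
qed

lemma nn_integral_stationary_transition_finite:
  assumes "stationary w"
  shows "(\<integral>\<^sup>+ u. indicator X u * ennreal (w u) * transition Y u \<partial>lborel) \<noteq> \<infinity>"
proof -
  have "(\<integral>\<^sup>+ u. indicator X u * ennreal (w u) * transition Y u \<partial>lborel) \<le> (\<integral>\<^sup>+ u. ennreal (w u) \<partial>lborel)"
    by (rule nn_integral_indicator_mult_le) (rule transition_le_1)
  with assms show ?thesis by (auto simp: stationary_def top_unique)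
qed

lemma stationary_flow_balance:
  assumes w: "stationary w"
  shows "(\<integral>\<^sup>+ u. indicator {t..} u * ennreal (w u) * transition {..<t} u \<partial>lborel) =
    (\<integral>\<^sup>+ u. indicator {..<t} u * ennreal (w u) * transition {t..} u \<partial>lborel)"
proof -
  note [measurable] = conjunct1[OF w[unfolded stationary_def]]
  define I where "I X Y = (\<integral>\<^sup>+ u. indicator X u * ennreal (w u) * transition Y u \<partial>lborel)" for X Y
  have "I {..<t} {..<t} + I {t..} {..<t} = (\<integral>\<^sup>+ u. ennreal (w u) * transition {..<t} u \<partial>lborel)"
    unfolding I_def
    by (subst nn_integral_add[symmetric]) (auto intro!: nn_integral_cong simp: indicator_def)
  also have "\<dots> = (\<integral>\<^sup>+ v. indicator {..<t} v * ennreal (w v) \<partial>lborel)"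
    by (rule nn_integral_stationary[OF w, symmetric]) simp
  also have "\<dots> = I {..<t} {..<t} + I {..<t} {t..}"
    unfolding I_def using transition_lessThan_atLeast[of t]
    by (subst nn_integral_add[symmetric])
      (auto intro!: nn_integral_cong simp: distrib_left[symmetric] mult.assoc)
  finally have "I {..<t} {..<t} + I {t..} {..<t} = I {..<t} {..<t} + I {..<t} {t..}" .
  with nn_integral_stationary_transition_finite[OF w] show ?thesis
    by (simp add: I_def ennreal_add_left_cancel)
qed

lemma crossing_stationary_no_transition:
  assumes P: "stationary P" and Q: "stationary Q"
    and below: "\<And>u. u < t \<Longrightarrow> P u < Q u" and above: "\<And>u. t < u \<Longrightarrow> Q u < P u"
    and at: "P t = Q t"
  shows "AE u in lborel. t < u \<longrightarrow> transition {..<t} u = 0"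
    and "AE u in lborel. u < t \<longrightarrow> transition {t..} u = 0"
proof -
  note [measurable] = conjunct1[OF P[unfolded stationary_def]] conjunct1[OF Q[unfolded stationary_def]]
  have P0: "0 \<le> P u" and Q0: "0 \<le> Q u" for u
    using P Q by (auto simp: stationary_def)
  define I where "I w X Y = (\<integral>\<^sup>+ u. indicator X u * ennreal (w u) * transition Y u \<partial>lborel)" for w X Y
  define Z1 where "Z1 = I (\<lambda>u. P u - Q u) {t..} {..<t}"
  define Z2 where "Z2 = I (\<lambda>u. Q u - P u) {..<t} {t..}"
  have "I P {t..} {..<t} = I Q {t..} {..<t} + Z1"
    unfolding I_def Z1_def
    by (rule nn_integral_indicator_split_diff) (use above at Q0 in \<open>auto simp: le_less\<close>)
  moreover have "I Q {..<t} {t..} = I P {..<t} {t..} + Z2"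
    unfolding I_def Z2_def
    by (rule nn_integral_indicator_split_diff) (use below P0 in \<open>auto intro: less_imp_le\<close>)
  moreover have finite: "I P {..<t} {t..} \<noteq> \<infinity>"
    unfolding I_def by (rule nn_integral_stationary_transition_finite[OF P])
  ultimately have "I P {..<t} {t..} + 0 = I P {..<t} {t..} + (Z2 + Z1)"
    using stationary_flow_balance[OF P, of t] stationary_flow_balance[OF Q, of t]
    by (simp add: I_def add.assoc)
  then have "Z2 + Z1 = 0"
    using finite by (simp only: ennreal_add_left_cancel) auto
  then have "Z1 = 0" "Z2 = 0" by auto
  then have "AE u in lborel. indicator {t..} u * ennreal (P u - Q u) * transition {..<t} u = 0"
    and "AE u in lborel. indicator {..<t} u * ennreal (Q u - P u) * transition {t..} u = 0"
    unfolding Z1_def Z2_def I_def by (simp_all add: nn_integral_0_iff_AE)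
  moreover have "ennreal (P u - Q u) \<noteq> 0" if "t < u" for u
    using above[OF that] by simp
  moreover have "ennreal (Q u - P u) \<noteq> 0" if "u < t" for u
    using below[OF that] by simp
  ultimately show "AE u in lborel. t < u \<longrightarrow> transition {..<t} u = 0"
    and "AE u in lborel. u < t \<longrightarrow> transition {t..} u = 0"
    by (auto elim!: eventually_mono simp: indicator_def)
qed

lemma crossing_stationary_separates:
  assumes "stationary P" "stationary Q"
    and "\<And>u. u < t \<Longrightarrow> P u < Q u" "\<And>u. t < u \<Longrightarrow> Q u < P u" "P t = Q t"
  shows "v < t \<Longrightarrow> t < u \<Longrightarrow> G v u = 0"
    and "u < t \<Longrightarrow> t < v \<Longrightarrow> G v u = 0"
proof -
  note no_transition = crossing_stationary_no_transition[OF assms]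
  show "G v u = 0" if "v < t" "t < u"
  proof -
    have "AE u in lborel. u \<in> {t<..} \<longrightarrow> G v u = 0"
      using no_transition(1)
      by (rule eventually_mono) (use that in \<open>auto intro: transition_eq_0_imp_zero[of "{..<t}" _ "{..<t}"]\<close>)
    from continuous_AE_zero_imp_zero[OF continuous_on_snd_slice this] that show ?thesis by simp
  qed
  show "G v u = 0" if "u < t" "t < v"
  proof -
    have "AE u in lborel. u \<in> {..<t} \<longrightarrow> G v u = 0"
      using no_transition(2)
      by (rule eventually_mono) (use that in \<open>auto intro: transition_eq_0_imp_zero[of "{t..}" _ "{t<..}"]\<close>)
    from continuous_AE_zero_imp_zero[OF continuous_on_snd_slice this] that show ?thesis by simp
  qed
qed

theorem stationary_increasing_ratio_contradiction:
  assumes f: "stationary f" and g: "stationary g"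
    and ratio: "\<And>u t. u < t \<Longrightarrow> f t * g u < g t * f u"
  shows False
proof -
  have off_diagonal: "G v u = 0" if "v \<noteq> u" for v u
  proof -
    define t where "t = (u + v) / 2"
    have "0 \<le> f t" "0 \<le> g t" using f g by (auto simp: stationary_def)
    then have P: "stationary (\<lambda>u. f t * g u)" and Q: "stationary (\<lambda>u. g t * f u)"
      using f g by (auto intro: stationary_scale)
    have below: "f t * g u < g t * f u" if "u < t" for u
      using ratio[OF that] .
    have above: "g t * f u < f t * g u" if "t < u" for u
      using ratio[OF that] by (simp add: mult.commute)
    note separates = crossing_stationary_separates[OF P Q below above mult.commute]
    show ?thesis
    proof (cases "v < u")
      case True
      then show ?thesis using separates(1)[of v u] unfolding t_def by simp
    next
      case False
      with that show ?thesis using separates(2)[of u v] unfolding t_def by simp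
    qed
  qed
  have "(\<integral>\<^sup>+ v. ennreal (G v 0) \<partial>lborel) = 0"
    using AE_lborel_singleton[of "0::real"]
    by (subst nn_integral_0_iff_AE) (auto elim!: eventually_mono simp: off_diagonal)
  then show False using total_mass[of 0] by simp
qed

end

lemma fU_eq_normal_density:
  "fU x1 x = sqrt pi * 0.5 / sqrt (2 * pi) *
    (normal_density (2 * x1) (sqrt (1/2)) x + normal_density 0 (sqrt (1/2)) x)"
  by (simp add: fU_def normal_density_def real_sqrt_mult algebra_simps)

lemma integrable_fU: "integrable lborel (fU x1)"
  unfolding fU_eq_normal_density by (intro integrable_mult_right Bochner_Integration.integrable_add) auto

lemma fU_pos: "0 < fU x1 x"
  unfolding fU_def by (intro add_pos_pos mult_pos_pos) auto

lemma borel_measurable_fU: "fU x1 \<in> borel_measurable borel"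
  unfolding fU_def by measurable

lemma nn_integral_fU_finite: "(\<integral>\<^sup>+ u. ennreal (fU x1 u) \<partial>lborel) \<noteq> \<infinity>"
  using nn_integral_eq_integral[OF integrable_fU] fU_pos[of x1, THEN less_imp_le] by simp

text \<open>Strict monotonicity of \<open>fU 1 / fU (-1)\<close>, written without division.\<close>
lemma fU_ratio_strict_mono:
  assumes "u < t"
  shows "fU (-1) t * fU 1 u < fU 1 t * fU (-1) u"
proof -
  define c :: real where "c = 0.5 / sqrt (2 * pi)"
  define E where "E x = exp (- (x\<^sup>2))" for x :: real
  have E_mono: "E a * E b < E a' * E b'" if "a'\<^sup>2 + b'\<^sup>2 < a\<^sup>2 + b\<^sup>2" for a b a' b'
    unfolding E_def exp_add[symmetric] using that by simp
  have "E (t + 2) * E (u - 2) < E (t - 2) * E (u + 2)"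
    "E (t + 2) * E u < E t * E (u + 2)" "E t * E (u - 2) < E (t - 2) * E u"
    by (rule E_mono; use assms in \<open>simp add: power2_eq_square algebra_simps\<close>)+
  then have "(E (t + 2) + E t) * (E (u - 2) + E u) < (E (t - 2) + E t) * (E (u + 2) + E u)"
    by (simp add: algebra_simps)
  moreover have "fU (-1) t * fU 1 u = c\<^sup>2 * ((E (t + 2) + E t) * (E (u - 2) + E u))"
    and "fU 1 t * fU (-1) u = c\<^sup>2 * ((E (t - 2) + E t) * (E (u + 2) + E u))"
    by (simp_all add: fU_def c_def E_def power2_eq_square algebra_simps)
  moreover have "0 < c\<^sup>2" by (simp add: c_def)
  ultimately show ?thesis by simp
qed

theorem proposition1:
  shows "\<not> (\<exists>\<Psi> :: real \<Rightarrow> real \<Rightarrow> real.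
      continuous_on UNIV (\<lambda>(v, u). \<Psi> v u)
    \<and> (\<forall>v u. 0 \<le> \<Psi> v u)
    \<and> (\<forall>u. (\<lambda>v. \<Psi> v u) \<in> borel_measurable lborel
           \<and> (\<integral>\<^sup>+ v. ennreal (\<Psi> v u) \<partial>lborel) = 1)
    \<and> (\<exists>c > 0. \<forall>u.
          (\<integral>\<^sup>+ t. ennreal ((\<bar>(\<integral>v\<in>{..t}. \<Psi> v u \<partial>lborel) - Phi (t - u)\<bar>)\<^sup>2) \<partial>lborel)
            \<ge> ennreal c)
    \<and> (\<forall>x1 \<in> {-1, 1::real}. \<forall>v.
          (\<integral>\<^sup>+ u. ennreal (fU x1 u * \<Psi> v u) \<partial>lborel) = ennreal (fU x1 v)))"
proof (intro notI, elim exE conjE, goal_cases)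
  case (1 \<Psi>)
  interpret continuous_transition_density \<Psi>
    using 1 by unfold_locales auto
  have "stationary (fU x1)" if "x1 \<in> {-1, 1}" for x1
    using 1 that borel_measurable_fU nn_integral_fU_finite fU_pos[THEN less_imp_le]
    by (auto simp: stationary_def)
  then show False
    using stationary_increasing_ratio_contradiction fU_ratio_strict_mono by blast
qed

end
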